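(* Let $n\ge1$ and define automorphisms $a,b,c,d_1,\dots,d_n$ of the binary rooted tree $\mathcal{T}_2$ (vertex set the finite words over $\{0,1\}$) recursively by the wreath recursions $a=(0~1)(c,b)$, $b=(0~1)(b,c)$, $c=\sigma_0(d_1,d_1)$, $d_i=\sigma_i(d_{i+1},d_{i+1})$ for $1\le i\le n-1$, $d_n=\sigma_n(a,a)$, where $\sigma_1=(0~1)$ and $\sigma_i=\mathrm{id}$ for all $i\neq1$ (including $\sigma_0$). Then $a$ acts transitively on each level of $\mathcal{T}_2$ (i.e. on the set of words of length $m$, for every $m\ge0$).
   Context: The wreath recursion $f=\pi(f_0,f_1)$ (with $\pi\in S_2$ a permutation of $\{0,1\}$ and $f_0,f_1\in\mathrm{Aut}(\mathcal{T}_2)$) means $f(xw)=\pi(x)\,f_x(w)$ for $x\in\{0,1\}$ and words $w$. *)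

theory Defs
  imports Main
begin

text \<open>Letters: 0 is False, 1 is True. Vertices of the binary tree are bool lists.
  The states of the automaton: SA = a, SB = b, SC = c, SD i = d_i (1 <= i <= n).\<close>

datatype st = SA | SB | SC | SD nat

text \<open>Root permutation: True means the transposition (0 1).
  a and b have (0 1); c has sigma_0 = id; d_i has sigma_i, which is (0 1) iff i = 1.\<close>
fun swaps :: "st \<Rightarrow> bool" where
  "swaps SA = True"
| "swaps SB = True"
| "swaps SC = False"
| "swaps (SD i) = (i = 1)"

fun sect :: "nat \<Rightarrow> st \<Rightarrow> bool \<Rightarrow> st" where
  "sect n SA x = (if x then SB else SC)"
| "sect n SB x = (if x then SC else SB)"
| "sect n SC x = SD 1"
| "sect n (SD i) x = (if i < n then SD (Suc i) else SA)"

fun act :: "nat \<Rightarrow> st \<Rightarrow> bool list \<Rightarrow> bool list" where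
  "act n s [] = []"
| "act n s (x # w) = (if swaps s then \<not> x else x) # act n (sect n s x) w"

end

theory Submission
  imports Defs
begin

text \<open>Write g for the action of a state s. The last letter of g^k(p x) is x, flipped once for
  every i < k at which the section of s at g^i(p) swaps. If g cycles through the 2^m words of
  level m, then over one full cycle this number of flips is the number of swapping sections of s
  at level m; when it is odd, g^(2^m) fixes p and flips the letter below it, so g cycles through
  the 2^(m+1) words of level m+1. For s = a these counts are odd at every level: the counts for c
  are even, since the sections of c below the root are twins, and hence those for b and a odd.\<close>

fun section_at :: "nat \<Rightarrow> st \<Rightarrow> bool list \<Rightarrow> st" where
  "section_at n s [] = s"
| "section_at n s (x # w) = section_at n (sect n s x) w"

definition swap_count :: "nat \<Rightarrow> st \<Rightarrow> nat \<Rightarrow> nat" where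
  "swap_count n s m = card {w. length w = m \<and> swaps (section_at n s w)}"

definition orbit_swaps :: "nat \<Rightarrow> st \<Rightarrow> bool list \<Rightarrow> nat \<Rightarrow> nat" where
  "orbit_swaps n s p k = (\<Sum>i<k. of_bool (swaps (section_at n s ((act n s ^^ i) p))))"

lemma length_act [simp]: "length (act n s w) = length w"
  by (induction w arbitrary: s) auto

lemma length_funpow_act [simp]: "length ((act n s ^^ k) w) = length w"
  by (induction k) auto

lemma act_snoc: "act n s (p @ [x]) = act n s p @ [swaps (section_at n s p) \<noteq> x]"
  by (induction p arbitrary: s) auto

lemma funpow_act_snoc:
  "(act n s ^^ k) (p @ [x]) = (act n s ^^ k) p @ [odd (orbit_swaps n s p k) \<noteq> x]"
  by (induction k) (auto simp: act_snoc orbit_swaps_def)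

lemma finite_words_length: "finite {w :: bool list. length w = m}"
  using finite_lists_length_eq[of "UNIV :: bool set" m] by simp

lemma card_words_length: "card {w :: bool list. length w = m} = 2 ^ m"
  using card_lists_length_eq[of "UNIV :: bool set" m] by simp

lemma words_length_Suc_snoc:
  "length w = Suc m \<Longrightarrow> \<exists>p x. w = p @ [x] \<and> length p = m"
  by (cases w rule: rev_cases) auto

lemma swap_count_0: "swap_count n s 0 = of_bool (swaps s)"
proof -
  have "{w :: bool list. length w = 0 \<and> swaps (section_at n s w)} = (if swaps s then {[]} else {})"
    by auto
  then show ?thesis by (simp add: swap_count_def)
qed

lemma swap_count_Suc:
  "swap_count n s (Suc m) = swap_count n (sect n s False) m + swap_count n (sect n s True) m"
proof -
  let ?W = "\<lambda>t. {w. length w = m \<and> swaps (section_at n t w)}"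
  have "{w. length w = Suc m \<and> swaps (section_at n s w)}
      = Cons False ` ?W (sect n s False) \<union> Cons True ` ?W (sect n s True)"
    by (auto simp: length_Suc_conv image_iff) (metis (full_types))
  moreover have "finite (?W t)" for t
    by (rule finite_subset[OF _ finite_words_length[of m]]) auto
  ultimately have "card {w. length w = Suc m \<and> swaps (section_at n s w)}
      = card (Cons False ` ?W (sect n s False)) + card (Cons True ` ?W (sect n s True))"
    by (simp only:) (rule card_Un_disjoint; auto)
  then show ?thesis
    by (simp add: swap_count_def card_image)
qed

lemma swap_count_parity: "even (swap_count n SC m) \<and> odd (swap_count n SB m)"
  by (induction m) (auto simp: swap_count_0 swap_count_Suc)

lemma odd_swap_count_SA: "odd (swap_count n SA m)"
  using swap_count_parity[of n] by (cases m) (auto simp: swap_count_0 swap_count_Suc)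

lemma orbit_swaps_full_cycle:
  assumes orbit: "(\<lambda>i. (act n s ^^ i) p) ` {..<2 ^ m} = {q. length q = m}"
  shows "orbit_swaps n s p (2 ^ m) = swap_count n s m"
proof -
  have "inj_on (\<lambda>i. (act n s ^^ i) p) {..<2 ^ m}"
    by (rule eq_card_imp_inj_on) (simp_all add: orbit card_words_length)
  then have "orbit_swaps n s p (2 ^ m)
      = (\<Sum>q \<in> {q. length q = m}. of_bool (swaps (section_at n s q)))"
    unfolding orbit_swaps_def orbit[symmetric] by (simp add: sum.reindex del: sum_of_bool_eq)
  also have "\<dots> = swap_count n s m"
    using finite_words_length by (simp add: swap_count_def Int_def conj_commute)
  finally show ?thesis .
qed

lemma orbit_extend:
  assumes orbit: "(\<lambda>i. (act n s ^^ i) p) ` {..<2 ^ m} = {q. length q = m}"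
    and flip: "\<And>y. (act n s ^^ 2 ^ m) (p @ [y]) = p @ [\<not> y]"
  shows "(\<lambda>i. (act n s ^^ i) (p @ [x])) ` {..<2 ^ Suc m} = {q. length q = Suc m}"
proof
  have "p \<in> (\<lambda>i. (act n s ^^ i) p) ` {..<2 ^ m}"
    by (rule image_eqI[of _ _ 0]) simp_all
  then have "length p = m"
    using orbit by simp
  then show "(\<lambda>i. (act n s ^^ i) (p @ [x])) ` {..<2 ^ Suc m} \<subseteq> {q. length q = Suc m}"
    by auto
next
  show "{q. length q = Suc m} \<subseteq> (\<lambda>i. (act n s ^^ i) (p @ [x])) ` {..<2 ^ Suc m}"
  proof
    fix v :: "bool list"
    assume "v \<in> {q. length q = Suc m}"
    then obtain q y where v: "v = q @ [y]" and "length q = m"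
      using words_length_Suc_snoc by blast
    then have "q \<in> (\<lambda>i. (act n s ^^ i) p) ` {..<2 ^ m}"
      using orbit by simp
    then obtain j where j: "j < 2 ^ m" and q: "q = (act n s ^^ j) p"
      by auto
    let ?z = "odd (orbit_swaps n s p j) \<noteq> x"
    have "(act n s ^^ j) (p @ [x]) = q @ [?z]"
      using q by (simp add: funpow_act_snoc)
    moreover have "(act n s ^^ (j + 2 ^ m)) (p @ [x]) = q @ [\<not> ?z]"
      using q flip by (simp add: funpow_add funpow_act_snoc)
    ultimately have "v \<in> (\<lambda>i. (act n s ^^ i) (p @ [x])) ` {j, j + 2 ^ m}"
      using v by auto
    moreover have "{j, j + 2 ^ m} \<subseteq> {..<2 ^ Suc m}"
      using j by simp
    ultimately show "v \<in> (\<lambda>i. (act n s ^^ i) (p @ [x])) ` {..<2 ^ Suc m}"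
      by blast
  qed
qed

lemma cycle_on_levels:
  assumes odd: "\<And>m. odd (swap_count n s m)"
    and "length p = m"
  shows "(act n s ^^ 2 ^ m) p = p
    \<and> (\<lambda>i. (act n s ^^ i) p) ` {..<2 ^ m} = {q. length q = m}"
  using \<open>length p = m\<close>
proof (induction m arbitrary: p)
  case 0
  then show ?case by auto
next
  case (Suc m)
  obtain q x where p: "p = q @ [x]" and "length q = m"
    using Suc.prems words_length_Suc_snoc by blast
  with Suc.IH have cycle: "(act n s ^^ 2 ^ m) q = q"
    and orbit: "(\<lambda>i. (act n s ^^ i) q) ` {..<2 ^ m} = {w. length w = m}"
    by auto
  have flip: "(act n s ^^ 2 ^ m) (q @ [y]) = q @ [\<not> y]" for y
    using cycle odd orbit_swaps_full_cycle[OF orbit] by (simp add: funpow_act_snoc)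
  have "(act n s ^^ 2 ^ Suc m) p = p"
    using funpow_add[of "2 ^ m" "2 ^ m" "act n s"] by (simp add: p mult_2 flip)
  with orbit_extend[OF orbit flip] show ?case
    by (simp add: p)
qed

theorem mainTheorem6:
  fixes n :: nat
  assumes "n \<ge> 1"
  shows "\<forall>m u v. length u = m \<longrightarrow> length v = m \<longrightarrow>
           (\<exists>k::nat. (act n SA ^^ k) u = v)"
proof (intro allI impI)
  fix m and u v :: "bool list"
  assume "length u = m" and "length v = m"
  with cycle_on_levels[OF odd_swap_count_SA] have "v \<in> (\<lambda>i. (act n SA ^^ i) u) ` {..<2 ^ m}"
    by blast
  then show "\<exists>k. (act n SA ^^ k) u = v"
    by blast
qed

end
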